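(* For GP-EI with BSPMI and any $t\in\mathbb{N}$, when $E^r(t)$ holds, $$r_t\le\big(c_\mu(t)+\phi(0)+2\beta_t^{1/2}\big)\sigma_{t-1}(\mathbf{x}_t)+c_\alpha\beta_t^{1/2}\sigma_{t-1}([\mathbf{x}^*]_t)+\frac{1}{t^2},$$ where $c_\mu(t)=\log^{1/2}\!\big(\frac{t-1+\sigma^2}{2\pi\phi^2(0)\sigma^2}\big)$ and $c_\alpha=1.328$.
   Context: Setting: $d\ge1$, $r>0$, $C\subseteq[0,r]^d$ compact; $k$ positive semidefinite kernel with $k(\mathbf{x},\mathbf{x}')\le1$, $k(\mathbf{x},\mathbf{x})=1$ on $C$. $f$ is a sample path of $GP(0,k)$, Lipschitz with constant $L\ge1/(rd)$ in $\ell_1$-norm; $\mathbf{x}^*\in\arg\min_Cf$. Observations $y_t=f(\mathbf{x}_t)+\epsilon_t$, $\epsilon_t$ i.i.d. $\mathcal{N}(0,\sigma^2)$, $\sigma>0$. Posterior $\mu_t(\mathbf{x})=\mathbf{k}_t(\mathbf{x})^T(\mathbf{K}_t+\sigma^2\mathbf{I})^{-1}\mathbf{y}_{1:t}$, $\sigma_t^2(\mathbf{x})=1-\mathbf{k}_t(\mathbf{x})^T(\mathbf{K}_t+\sigma^2\mathbf{I})^{-1}\mathbf{k}_t(\mathbf{x})$ ($\mathbf{K}_t=[k(\mathbf{x}_i,\mathbf{x}_j)]_{i,j\le t}$, $\mathbf{k}_t(\mathbf{x})=[k(\mathbf{x}_i,\mathbf{x})]_{i\le t}$). BSPMI incumbent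 $\xi_t^+=\mu_t^m=\min_{i\le t}\mu_t(\mathbf{x}_i)$. $EI_t(\mathbf{x})=(\xi_t^+-\mu_t(\mathbf{x}))\Phi(z_t(\mathbf{x}))+\sigma_t(\mathbf{x})\phi(z_t(\mathbf{x}))$, $z_t=(\xi_t^+-\mu_t)/\sigma_t$, $\phi,\Phi$ standard normal pdf/cdf; GP-EI picks $\mathbf{x}_t\in\arg\max_CEI_{t-1}$. $r_t=f(\mathbf{x}_t)-f(\mathbf{x}^* )$. Discretization: $\mathbb{C}_t\subseteq C$ finite, $|\mathbb{C}_t|=(Lrdt^2)^d$, $\|\mathbf{x}-[\mathbf{x}]_t\|_1\le1/(Lt^2)$ for all $\mathbf{x}\in C$, $[\mathbf{x}]_t$ a closest point of $\mathbb{C}_t$. With $\delta\in(0,1)$, $\pi_t=\pi^2t^2/6$, $\beta_t=2\log(8|\mathbb{C}_t|\pi_t/\delta)$. $E^r(t)$ is the event that $|f(\mathbf{x})-\mu_{t-1}(\mathbf{x})|\le\beta_t^{1/2}\sigma_{t-1}(\mathbf{x})$ holds for all $\mathbf{x}\in\mathbb{C}_t$, for $\mathbf{x}=\mathbf{x}_t$, and for $\mathbf{x}=\mathbf{x}_{t-1}$. *)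

theory Defs
  imports "HOL-Probability.Probability" "Jordan_Normal_Form.Gauss_Jordan_Elimination"
begin

definition Phi :: "real \<Rightarrow> real" where
  "Phi z = measure (density lborel std_normal_density) {..z}"

abbreviation phi :: "real \<Rightarrow> real" where
  "phi \<equiv> std_normal_density"

definition l1dist :: "'a::euclidean_space \<Rightarrow> 'a \<Rightarrow> real" where
  "l1dist x y = (\<Sum>i\<in>Basis. \<bar>(x - y) \<bullet> i\<bar>)"

text \<open>Points are x 1, ..., x t; observations y 1, ..., y t; noise variance s2 = sigma^2.\<close>

definition Kmat :: "('a \<Rightarrow> 'a \<Rightarrow> real) \<Rightarrow> (nat \<Rightarrow> 'a) \<Rightarrow> nat \<Rightarrow> real mat" where
  "Kmat k x t = mat t t (\<lambda>(i, j). k (x (Suc i)) (x (Suc j)))"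

definition kvec :: "('a \<Rightarrow> 'a \<Rightarrow> real) \<Rightarrow> (nat \<Rightarrow> 'a) \<Rightarrow> nat \<Rightarrow> 'a \<Rightarrow> real vec" where
  "kvec k x t z = vec t (\<lambda>i. k (x (Suc i)) z)"

definition yvec :: "(nat \<Rightarrow> real) \<Rightarrow> nat \<Rightarrow> real vec" where
  "yvec y t = vec t (\<lambda>i. y (Suc i))"

definition reg_inv :: "('a \<Rightarrow> 'a \<Rightarrow> real) \<Rightarrow> real \<Rightarrow> (nat \<Rightarrow> 'a) \<Rightarrow> nat \<Rightarrow> real mat" where
  "reg_inv k s2 x t = the (mat_inverse (Kmat k x t + s2 \<cdot>\<^sub>m 1\<^sub>m t))"

definition post_mean :: "('a \<Rightarrow> 'a \<Rightarrow> real) \<Rightarrow> real \<Rightarrow> (nat \<Rightarrow> 'a) \<Rightarrow> (nat \<Rightarrow> real) \<Rightarrow> nat \<Rightarrow> 'a \<Rightarrow> real" where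
  "post_mean k s2 x y t z = kvec k x t z \<bullet> (reg_inv k s2 x t *\<^sub>v yvec y t)"

definition post_var :: "('a \<Rightarrow> 'a \<Rightarrow> real) \<Rightarrow> real \<Rightarrow> (nat \<Rightarrow> 'a) \<Rightarrow> nat \<Rightarrow> 'a \<Rightarrow> real" where
  "post_var k s2 x t z = 1 - kvec k x t z \<bullet> (reg_inv k s2 x t *\<^sub>v kvec k x t z)"

definition post_sd :: "('a \<Rightarrow> 'a \<Rightarrow> real) \<Rightarrow> real \<Rightarrow> (nat \<Rightarrow> 'a) \<Rightarrow> nat \<Rightarrow> 'a \<Rightarrow> real" where
  "post_sd k s2 x t z = sqrt (post_var k s2 x t z)"

definition incumbent :: "('a \<Rightarrow> 'a \<Rightarrow> real) \<Rightarrow> real \<Rightarrow> (nat \<Rightarrow> 'a) \<Rightarrow> (nat \<Rightarrow> real) \<Rightarrow> nat \<Rightarrow> real" where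
  "incumbent k s2 x y t = Min ((\<lambda>i. post_mean k s2 x y t (x i)) ` {1..t})"

definition EI :: "('a \<Rightarrow> 'a \<Rightarrow> real) \<Rightarrow> real \<Rightarrow> (nat \<Rightarrow> 'a) \<Rightarrow> (nat \<Rightarrow> real) \<Rightarrow> nat \<Rightarrow> 'a \<Rightarrow> real" where
  "EI k s2 x y t z =
     (let xi = incumbent k s2 x y t; m = post_mean k s2 x y t z; s = post_sd k s2 x t z;
          u = (xi - m) / s
      in (xi - m) * Phi u + s * phi u)"

definition psd_kernel_on :: "'a set \<Rightarrow> ('a \<Rightarrow> 'a \<Rightarrow> real) \<Rightarrow> bool" where
  "psd_kernel_on C k \<longleftrightarrow> (\<forall>x y. x \<in> C \<longrightarrow> y \<in> C \<longrightarrow> k x y = k y x) \<and>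
     (\<forall>n (p :: nat \<Rightarrow> 'a) (a :: nat \<Rightarrow> real). (\<forall>i<n. p i \<in> C) \<longrightarrow>
        (\<Sum>i<n. \<Sum>j<n. a i * a j * k (p i) (p j)) \<ge> 0)"

end

theory Submission
  imports Defs "Jordan_Normal_Form.Determinant"
begin

text \<open>
  Write the expected improvement as \<open>s tau ((xi - m) / s)\<close> with \<open>tau u = u Phi u + phi u\<close>.
  On \<open>C\<close> the posterior deviation after \<open>n\<close> observations lies between
  \<open>c = sqrt (sigma\<^sup>2 / (n + sigma\<^sup>2))\<close> and \<open>1\<close>. The incumbent is the posterior mean at a
  sampled point, where the expected improvement is at least \<open>c phi 0\<close>; since \<open>x t\<close> maximizes
  it and \<open>tau u \<le> phi u\<close> for \<open>u \<le> 0\<close>, the posterior mean at \<open>x t\<close> exceeds the incumbent by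
  at most \<open>sqrt (- 2 ln c) = c\<^sub>\<mu>\<close> deviations. Comparing with \<open>[x*]\<^sub>t\<close> through
  \<open>u - sqrt (2 / pi) \<le> tau u \<le> max u 0 + phi 0\<close> bounds the difference of the posterior means;
  the event \<open>E\<^sup>r(t)\<close> turns means into function values, Lipschitz continuity costs \<open>1 / t\<^sup>2\<close>
  between \<open>[x*]\<^sub>t\<close> and \<open>x*\<close>, and \<open>beta\<^sub>t \<ge> 32 / 5\<close> absorbs \<open>sqrt (2 / pi)\<close> into
  \<open>0.328 sqrt beta\<^sub>t\<close>.
\<close>

section \<open>The standard normal distribution\<close>

lemma Phi_nonneg: "0 \<le> Phi z"
  by (simp add: Phi_def)

lemma Phi_le_1: "Phi z \<le> 1"
proof -
  interpret prob_space "density lborel phi"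
    using prob_space_normal_density[of 1 0] by simp
  show ?thesis unfolding Phi_def by (rule prob_le_1)
qed

lemma one_minus_Phi_eq_integral: "1 - Phi z = integral\<^sup>L lborel (\<lambda>u. phi u * indicator {z<..} u)"
proof -
  interpret prob_space "density lborel phi"
    using prob_space_normal_density[of 1 0] by simp
  have "1 - Phi z = measure (density lborel phi) (UNIV - {..z})"
    unfolding Phi_def using prob_compl[of "{..z}"] by simp
  also have "UNIV - {..z} = {z<..}" by auto
  also have "measure (density lborel phi) {z<..} = integral\<^sup>L (density lborel phi) (indicator {z<..})"
    by simp
  also have "\<dots> = integral\<^sup>L lborel (\<lambda>u. phi u *\<^sub>R indicator {z<..} u)"
    by (rule integral_density) auto
  finally show ?thesis by simp
qed

text \<open>For \<open>z > 0\<close>: \<open>z P(Z > z) \<le> E|Z| = sqrt (2 / pi)\<close>.\<close>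

lemma mult_one_minus_Phi_le: "z * (1 - Phi z) \<le> sqrt (2 / pi)"
proof (cases "z > 0")
  case False
  then have "z * (1 - Phi z) \<le> 0"
    using Phi_le_1[of z] by (simp add: mult_nonpos_nonneg)
  moreover have "0 \<le> sqrt (2 / pi)" by simp
  ultimately show ?thesis by linarith
next
  case True
  have "z * (1 - Phi z) = integral\<^sup>L lborel (\<lambda>u. z * (phi u * indicator {z<..} u))"
    by (simp add: one_minus_Phi_eq_integral)
  also have "\<dots> \<le> integral\<^sup>L lborel (\<lambda>u. phi u * \<bar>u\<bar> ^ (2 * 0 + 1))"
  proof (rule integral_mono)
    show "integrable lborel (\<lambda>u. z * (phi u * indicator {z<..} u))"
      by (intro integrable_mult_right integrable_real_mult_indicator) auto
    show "integrable lborel (\<lambda>u. phi u * \<bar>u\<bar> ^ (2 * 0 + 1))"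
      by (rule integrable_std_normal_moment_abs)
    show "z * (phi u * indicator {z<..} u) \<le> phi u * \<bar>u\<bar> ^ (2 * 0 + 1)" for u
      using True by (auto simp: indicator_def mult.commute intro!: mult_right_mono)
  qed
  also have "\<dots> = sqrt (2 / pi)"
    using integral_std_normal_moment_abs_odd[of 0] by simp
  finally show ?thesis .
qed

lemma phi_eq_phi_0_mult_exp: "phi u = phi 0 * exp (- u\<^sup>2 / 2)"
  by (simp add: std_normal_density_def)

lemma phi_0_pos: "0 < phi 0"
  by (simp add: std_normal_density_def)

lemma phi_le_phi_0: "phi u \<le> phi 0"
  using phi_eq_phi_0_mult_exp[of u] phi_0_pos by (simp add: mult_le_cancel_left1)

lemma phi_0_squared: "(phi 0)\<^sup>2 = 1 / (2 * pi)"
  by (simp add: std_normal_density_def power_divide)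

section \<open>The expected improvement as a function of improvement and deviation\<close>

definition tau :: "real \<Rightarrow> real" where
  "tau u = u * Phi u + phi u"

definition ei :: "real \<Rightarrow> real \<Rightarrow> real" where
  "ei a s = a * Phi (a / s) + s * phi (a / s)"

lemma EI_eq_ei:
  "EI k s2 x y n z = ei (incumbent k s2 x y n - post_mean k s2 x y n z) (post_sd k s2 x n z)"
  by (simp add: EI_def ei_def Let_def)

lemma ei_eq_mult_tau: "s \<noteq> 0 \<Longrightarrow> ei a s = s * tau (a / s)"
  by (simp add: ei_def tau_def algebra_simps)

lemma ei_zero: "ei 0 s = s * phi 0"
  by (simp add: ei_def)

lemma tau_ge: "u - sqrt (2 / pi) \<le> tau u"
proof -
  have "u - u * Phi u \<le> sqrt (2 / pi)"
    using mult_one_minus_Phi_le[of u] by (simp add: right_diff_distrib)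
  moreover have "0 \<le> phi u" by simp
  ultimately show ?thesis unfolding tau_def by linarith
qed

lemma tau_le: "tau u \<le> max u 0 + phi 0"
proof -
  have "u * Phi u \<le> max u 0"
    using Phi_le_1[of u] Phi_nonneg[of u]
    by (cases "u \<ge> 0") (auto simp: mult_left_le mult_nonpos_nonneg)
  then show ?thesis using phi_le_phi_0[of u] by (simp add: tau_def)
qed

lemma tau_le_phi: "u \<le> 0 \<Longrightarrow> tau u \<le> phi u"
  using Phi_nonneg[of u] by (simp add: tau_def mult_nonpos_nonneg)

lemma ei_ge: "0 < s \<Longrightarrow> a - sqrt (2 / pi) * s \<le> ei a s"
  using mult_left_mono[OF tau_ge[of "a / s"], of s] by (simp add: ei_eq_mult_tau algebra_simps)

lemma ei_le: "0 < s \<Longrightarrow> ei a s \<le> max a 0 + phi 0 * s"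
  using mult_left_mono[OF tau_le[of "a / s"], of s]
  by (simp add: ei_eq_mult_tau distrib_left max_mult_distrib_left mult.commute)

text \<open>For \<open>a \<le> 0\<close> and \<open>s \<le> 1\<close>: \<open>ei a s \<le> s phi (a / s) \<le> phi 0 exp (- a\<^sup>2 / (2 s\<^sup>2))\<close>.\<close>

lemma neg_le_of_ei_ge:
  assumes s: "0 < s" "s \<le> 1" and c: "0 < c" "c \<le> 1" and ei: "c * phi 0 \<le> ei a s"
  shows "- a \<le> sqrt (- 2 * ln c) * s"
proof (cases "a \<le> 0")
  case False
  moreover have "0 \<le> sqrt (- 2 * ln c) * s" using c s by simp
  ultimately show ?thesis by simp
next
  case True
  define u where "u = a / s"
  have u: "u \<le> 0" "a = u * s" using s True by (auto simp: u_def divide_nonpos_pos)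
  have "c * phi 0 \<le> s * tau u"
    using ei s by (simp add: ei_eq_mult_tau u_def)
  also have "\<dots> \<le> s * phi u"
    using tau_le_phi[OF u(1)] s by (simp add: mult_left_mono)
  also have "\<dots> \<le> phi u"
    using s by (simp add: mult_left_le_one_le)
  also have "\<dots> = phi 0 * exp (- u\<^sup>2 / 2)"
    by (rule phi_eq_phi_0_mult_exp)
  finally have "c \<le> exp (- u\<^sup>2 / 2)"
    using phi_0_pos by (simp add: mult.commute)
  then have "ln c \<le> ln (exp (- u\<^sup>2 / 2))"
    using c by (subst ln_le_cancel_iff) auto
  then have "ln c \<le> - u\<^sup>2 / 2" by simp
  then have "(- u)\<^sup>2 \<le> - 2 * ln c" by simp
  then have "- u \<le> sqrt (- 2 * ln c)" by (rule real_le_rsqrt)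
  from mult_right_mono[OF this, of s] show ?thesis using u s by simp
qed

lemma improvement_diff_le:
  assumes s: "0 < s" "s \<le> 1" and s': "0 < s'" and c: "0 < c" "c \<le> 1"
    and ei_c: "c * phi 0 \<le> ei a s" and ei_max: "ei b s' \<le> ei a s"
  shows "b - a \<le> (sqrt (- 2 * ln c) + phi 0) * s + sqrt (2 / pi) * s'"
proof -
  have "b - a \<le> ei a s - a + sqrt (2 / pi) * s'"
    using ei_ge[OF s', of b] ei_max by simp
  also have "\<dots> \<le> max (- a) 0 + phi 0 * s + sqrt (2 / pi) * s'"
    using ei_le[OF s(1), of a] by (auto simp: max_def split: if_splits)
  also have "max (- a) 0 \<le> sqrt (- 2 * ln c) * s"
    using neg_le_of_ei_ge[OF s c ei_c] c s by simp
  finally show ?thesis by (simp add: algebra_simps)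
qed

section \<open>Positive semidefinite kernels\<close>

lemma psd_kernel_on_sym: "psd_kernel_on C k \<Longrightarrow> u \<in> C \<Longrightarrow> w \<in> C \<Longrightarrow> k u w = k w u"
  unfolding psd_kernel_on_def by auto

lemma psd_kernel_on_quadratic_form_nonneg:
  fixes n :: nat
  shows "psd_kernel_on C k \<Longrightarrow> \<forall>i<n. p i \<in> C \<Longrightarrow> 0 \<le> (\<Sum>i<n. \<Sum>j<n. a i * a j * k (p i) (p j))"
  unfolding psd_kernel_on_def by blast

lemma psd_kernel_on_abs_le_1:
  assumes psd: "psd_kernel_on C k" and diag: "\<forall>u\<in>C. k u u = 1" and "u \<in> C" "w \<in> C"
  shows "\<bar>k u w\<bar> \<le> 1"
proof -
  let ?p = "\<lambda>i::nat. if i = 0 then u else w"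
  have p: "\<forall>i<2. ?p i \<in> C" using \<open>u \<in> C\<close> \<open>w \<in> C\<close> by auto
  have "0 \<le> (\<Sum>i<2. \<Sum>j<2. (\<lambda>_. 1) i * (\<lambda>_. 1) j * k (?p i) (?p j))"
    by (rule psd_kernel_on_quadratic_form_nonneg[OF psd p])
  moreover have "0 \<le> (\<Sum>i<2. \<Sum>j<2. (\<lambda>i. if i = 0 then 1 else -1) i *
      (\<lambda>i. if i = 0 then 1 else -1) j * k (?p i) (?p j))"
    by (rule psd_kernel_on_quadratic_form_nonneg[OF psd p])
  ultimately show ?thesis
    using psd_kernel_on_sym[OF psd \<open>u \<in> C\<close> \<open>w \<in> C\<close>] diag \<open>u \<in> C\<close> \<open>w \<in> C\<close>
    by (simp add: numeral_2_eq_2)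
qed

text \<open>The Gram form of \<open>p 0, ..., p (n - 1), z\<close> with coefficients
  \<open>- l v 0, ..., - l v (n - 1), 1\<close>.\<close>

lemma psd_kernel_on_extended_form_nonneg:
  fixes n :: nat
  assumes psd: "psd_kernel_on C k" and diag: "\<forall>u\<in>C. k u u = 1"
    and p: "\<forall>i<n. p i \<in> C" and z: "z \<in> C"
  shows "0 \<le> l\<^sup>2 * (\<Sum>i<n. \<Sum>j<n. v i * v j * k (p i) (p j)) - 2 * l * (\<Sum>i<n. v i * k (p i) z) + 1"
proof -
  let ?p = "\<lambda>i. if i < n then p i else z"
  let ?a = "\<lambda>i. if i < n then - l * v i else 1"
  have "0 \<le> (\<Sum>i<Suc n. \<Sum>j<Suc n. ?a i * ?a j * k (?p i) (?p j))"
    by (rule psd_kernel_on_quadratic_form_nonneg[OF psd]) (use p z in auto)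
  also have "\<dots> = (\<Sum>i<n. \<Sum>j<n. ?a i * ?a j * k (?p i) (?p j)) + (\<Sum>i<n. ?a i * k (?p i) z)
     + (\<Sum>j<n. ?a j * k z (?p j)) + k z z"
    by (simp add: sum.distrib add_ac)
  also have "(\<Sum>j<n. ?a j * k z (?p j)) = (\<Sum>i<n. ?a i * k (?p i) z)"
    using psd_kernel_on_sym[OF psd z] p by (intro sum.cong) auto
  finally show ?thesis
    using diag z by (simp add: sum_distrib_left sum_negf power2_eq_square mult_ac)
qed

lemma quadratic_form_le_of_abs_le_1:
  fixes v :: "nat \<Rightarrow> real"
  assumes "\<And>i j. i < n \<Longrightarrow> j < n \<Longrightarrow> \<bar>K i j\<bar> \<le> 1"
  shows "(\<Sum>i<n. \<Sum>j<n. v i * v j * K i j) \<le> real n * (\<Sum>i<n. v i * v i)"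
proof -
  have "v i * v j * K i j \<le> (v i * v i + v j * v j) / 2" if "i < n" "j < n" for i j
  proof -
    have "v i * v j * K i j \<le> \<bar>v i * v j\<bar> * \<bar>K i j\<bar>"
      by (metis abs_ge_self abs_mult)
    also have "\<dots> \<le> \<bar>v i * v j\<bar>"
      using assms[OF that] by (simp add: mult_left_le)
    also have "\<dots> \<le> (v i * v i + v j * v j) / 2"
      using sum_squares_bound[of "\<bar>v i\<bar>" "\<bar>v j\<bar>"] by (simp add: abs_mult power2_eq_square)
    finally show ?thesis .
  qed
  then have "(\<Sum>i<n. \<Sum>j<n. v i * v j * K i j) \<le> (\<Sum>i<n. \<Sum>j<n. (v i * v i + v j * v j) / 2)"
    by (intro sum_mono) auto
  also have "\<dots> = (\<Sum>i<n. \<Sum>j<n. v i * v i / 2) + (\<Sum>i<n. \<Sum>j<n. v j * v j / 2)"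
    by (simp add: sum.distrib add_divide_distrib)
  also have "(\<Sum>i<n. \<Sum>j<n. v j * v j / 2) = (\<Sum>i<n. \<Sum>j<n. v i * v i / 2)"
    by (rule sum.swap)
  finally show ?thesis by (simp add: sum_distrib_left sum_divide_distrib[symmetric])
qed

lemma quadratic_nonneg_imp_sq_le:
  fixes A q :: real
  assumes "0 \<le> A" and nonneg: "\<And>l. 0 \<le> l\<^sup>2 * A - 2 * l * q + 1"
  shows "q\<^sup>2 \<le> A"
proof (cases "A = 0")
  case True
  then have "q = 0" using nonneg[of "1 / q"] by (cases "q = 0") auto
  then show ?thesis using True by simp
next
  case False
  have "0 \<le> (q / A)\<^sup>2 * A - 2 * (q / A) * q + 1" by (rule nonneg)
  then show ?thesis using False \<open>0 \<le> A\<close> by (simp add: power2_eq_square field_simps)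
qed

lemma le_div_add_of_sq_le:
  fixes A b q s2 N :: real
  assumes A: "0 \<le> A" "A \<le> N * b" and "0 \<le> b" "0 \<le> N" "0 < s2"
    and sq: "q\<^sup>2 \<le> A" and q: "q = A + s2 * b"
  shows "0 \<le> q \<and> q \<le> N / (N + s2)"
proof -
  have q_nonneg: "0 \<le> q" using assms by simp
  have "q\<^sup>2 * (N + s2) \<le> A * N + A * s2"
    using mult_right_mono[OF sq, of "N + s2"] assms by (simp add: distrib_left)
  also have "\<dots> \<le> A * N + N * b * s2" using assms by simp
  also have "\<dots> = q * N" by (simp add: q algebra_simps)
  finally have "q * (q * (N + s2)) \<le> q * N" by (simp add: power2_eq_square mult.assoc)
  then have "q * (N + s2) \<le> N"
    using q_nonneg \<open>0 \<le> N\<close> by (cases "q = 0") (auto simp: mult_le_cancel_left_pos)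
  then show ?thesis using q_nonneg assms by (simp add: field_simps)
qed

section \<open>The Gaussian process posterior\<close>

lemma regularized_Kmat_quadratic_form:
  assumes "v \<in> carrier_vec n"
  shows "((Kmat k x n + s2 \<cdot>\<^sub>m 1\<^sub>m n) *\<^sub>v v) \<bullet> v =
     (\<Sum>i<n. \<Sum>j<n. v$i * v$j * k (x (Suc i)) (x (Suc j))) + s2 * (\<Sum>i<n. v$i * v$i)"
proof -
  have row: "((Kmat k x n + s2 \<cdot>\<^sub>m 1\<^sub>m n) *\<^sub>v v) $ i = (\<Sum>j<n. k (x (Suc i)) (x (Suc j)) * v$j) + s2 * v$i"
    if "i < n" for i
  proof -
    have "((Kmat k x n + s2 \<cdot>\<^sub>m 1\<^sub>m n) *\<^sub>v v) $ i =
        (\<Sum>j<n. k (x (Suc i)) (x (Suc j)) * v$j) + (\<Sum>j<n. s2 * (if i = j then 1 else 0) * v$j)"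
      using that assms
      by (simp add: Kmat_def scalar_prod_def row_def atLeast0LessThan distrib_right sum.distrib)
    also have "(\<Sum>j<n. s2 * (if i = j then 1 else 0) * v$j) = s2 * v$i"
      using that by (simp add: if_distrib if_distribR sum.delta cong: if_cong)
    finally show ?thesis .
  qed
  have "((Kmat k x n + s2 \<cdot>\<^sub>m 1\<^sub>m n) *\<^sub>v v) \<bullet> v = (\<Sum>i<n. ((Kmat k x n + s2 \<cdot>\<^sub>m 1\<^sub>m n) *\<^sub>v v) $ i * v$i)"
    using assms by (simp add: scalar_prod_def atLeast0LessThan)
  also have "\<dots> = (\<Sum>i<n. ((\<Sum>j<n. k (x (Suc i)) (x (Suc j)) * v$j) + s2 * v$i) * v$i)"
    by (intro sum.cong refl, subst row) auto
  also have "\<dots> = (\<Sum>i<n. \<Sum>j<n. v$i * v$j * k (x (Suc i)) (x (Suc j))) + s2 * (\<Sum>i<n. v$i * v$i)"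
    by (simp add: distrib_left distrib_right sum.distrib sum_distrib_left sum_distrib_right mult_ac)
  finally show ?thesis .
qed

lemma regularized_Kmat_invertible:
  assumes psd: "psd_kernel_on C k" and s2: "0 < s2" and x: "\<forall>i\<in>{1..n}. x i \<in> C"
  shows "\<exists>B. mat_inverse (Kmat k x n + s2 \<cdot>\<^sub>m 1\<^sub>m n) = Some B"
proof (rule ccontr)
  define M where "M = Kmat k x n + s2 \<cdot>\<^sub>m 1\<^sub>m n"
  have M: "M \<in> carrier_mat n n" unfolding M_def Kmat_def by simp
  assume "\<nexists>B. mat_inverse (Kmat k x n + s2 \<cdot>\<^sub>m 1\<^sub>m n) = Some B"
  then have "mat_inverse M = None" unfolding M_def by (cases "mat_inverse M") auto
  then obtain v where v: "v \<in> carrier_vec n" "v \<noteq> 0\<^sub>v n" "M *\<^sub>v v = 0\<^sub>v n"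
    using det_non_zero_imp_unit[OF M, where b="()"] mat_inverse(1)[OF M, where b="()"]
      det_0_iff_vec_prod_zero[OF M] by blast
  have "0 \<le> (\<Sum>i<n. \<Sum>j<n. v$i * v$j * k (x (Suc i)) (x (Suc j)))"
    by (rule psd_kernel_on_quadratic_form_nonneg[OF psd]) (use x in auto)
  moreover have "(M *\<^sub>v v) \<bullet> v = 0" using v by simp
  ultimately have "s2 * (\<Sum>i<n. v$i * v$i) \<le> 0"
    using regularized_Kmat_quadratic_form[OF v(1), where k=k and x=x and ?s2.0=s2]
    unfolding M_def by linarith
  then have "(\<Sum>i<n. v$i * v$i) \<le> 0"
    using s2 by (simp add: mult_le_0_iff)
  then have "\<forall>i\<in>{..<n}. v$i * v$i = 0"
    using sum_nonneg_eq_0_iff[of "{..<n}" "\<lambda>i. v$i * v$i"]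
    by (metis (no_types, lifting) finite_lessThan order_antisym_conv sum_nonneg zero_le_square)
  then have "v = 0\<^sub>v n" using v(1) by (intro eq_vecI) auto
  then show False using v(2) by simp
qed

lemma regularized_Kmat_mult_reg_inv:
  assumes "psd_kernel_on C k" "0 < s2" "\<forall>i\<in>{1..n}. x i \<in> C"
  shows "reg_inv k s2 x n \<in> carrier_mat n n \<and> (Kmat k x n + s2 \<cdot>\<^sub>m 1\<^sub>m n) * reg_inv k s2 x n = 1\<^sub>m n"
proof -
  have M: "Kmat k x n + s2 \<cdot>\<^sub>m 1\<^sub>m n \<in> carrier_mat n n" unfolding Kmat_def by simp
  obtain B where "mat_inverse (Kmat k x n + s2 \<cdot>\<^sub>m 1\<^sub>m n) = Some B"
    using regularized_Kmat_invertible[OF assms] by blast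
  then show ?thesis using mat_inverse(2)[OF M] by (simp add: reg_inv_def)
qed

text \<open>With \<open>v = (K + s2 I)\<^sup>-\<^sup>1 k(z)\<close>, \<open>A = v\<^sup>T K v\<close> and \<open>b = v\<^sup>T v\<close>, the explained variance
  \<open>q = k(z)\<^sup>T v\<close> equals \<open>A + s2 b\<close>, while \<open>q\<^sup>2 \<le> A \<le> n b\<close>; hence \<open>q \<le> n / (n + s2)\<close>.\<close>

lemma post_var_bounds:
  assumes psd: "psd_kernel_on C k" and diag: "\<forall>u\<in>C. k u u = 1" and s2: "0 < s2"
    and x: "\<forall>i\<in>{1..n}. x i \<in> C" and z: "z \<in> C"
  shows "s2 / (real n + s2) \<le> post_var k s2 x n z \<and> post_var k s2 x n z \<le> 1"
proof -
  define M where "M = Kmat k x n + s2 \<cdot>\<^sub>m 1\<^sub>m n"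
  define B where "B = reg_inv k s2 x n"
  have M: "M \<in> carrier_mat n n" unfolding M_def Kmat_def by simp
  have B: "B \<in> carrier_mat n n" and MB: "M * B = 1\<^sub>m n"
    using regularized_Kmat_mult_reg_inv[OF psd s2 x] by (auto simp: M_def B_def)
  define kz where "kz = kvec k x n z"
  define v where "v = B *\<^sub>v kz"
  have kz: "kz \<in> carrier_vec n" and v: "v \<in> carrier_vec n"
    using B by (auto simp: kz_def kvec_def v_def)
  have "M *\<^sub>v v = kz"
    using M B kz MB by (simp add: v_def assoc_mult_mat_vec[symmetric])
  define q where "q = kz \<bullet> v"
  define A where "A = (\<Sum>i<n. \<Sum>j<n. v$i * v$j * k (x (Suc i)) (x (Suc j)))"
  define b where "b = (\<Sum>i<n. v$i * v$i)"
  have var: "post_var k s2 x n z = 1 - q"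
    unfolding post_var_def q_def v_def kz_def B_def by simp
  have q_eq: "q = A + s2 * b"
    using regularized_Kmat_quadratic_form[OF v, where k=k and x=x and ?s2.0=s2] \<open>M *\<^sub>v v = kz\<close>
    by (simp add: q_def A_def b_def M_def)
  have xS: "\<forall>i<n. x (Suc i) \<in> C" using x by auto
  have A: "0 \<le> A"
    unfolding A_def by (rule psd_kernel_on_quadratic_form_nonneg[OF psd xS])
  have b: "0 \<le> b" unfolding b_def by (simp add: sum_nonneg)
  have "A \<le> real n * b"
    unfolding A_def b_def using psd_kernel_on_abs_le_1[OF psd diag] xS
    by (intro quadratic_form_le_of_abs_le_1) auto
  moreover have "q\<^sup>2 \<le> A"
  proof (rule quadratic_nonneg_imp_sq_le[OF A])
    have "q = (\<Sum>i<n. v$i * k (x (Suc i)) z)"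
      using v by (simp add: q_def scalar_prod_def kz_def kvec_def atLeast0LessThan mult.commute)
    then show "0 \<le> l\<^sup>2 * A - 2 * l * q + 1" for l
      unfolding A_def by (simp add: psd_kernel_on_extended_form_nonneg[OF psd diag xS z])
  qed
  ultimately have "0 \<le> q \<and> q \<le> real n / (real n + s2)"
    using le_div_add_of_sq_le[OF A _ b _ s2 _ q_eq] by simp
  moreover have "1 - real n / (real n + s2) = s2 / (real n + s2)" using s2 by (simp add: field_simps)
  ultimately show ?thesis using var by auto
qed

lemma post_sd_bounds:
  assumes "psd_kernel_on C k" "\<forall>u\<in>C. k u u = 1" "0 < s2" "\<forall>i\<in>{1..n}. x i \<in> C" "z \<in> C"
  shows "sqrt (s2 / (real n + s2)) \<le> post_sd k s2 x n z \<and> post_sd k s2 x n z \<le> 1"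
  using post_var_bounds[OF assms] by (simp add: post_sd_def)

lemma post_sd_pos:
  assumes "psd_kernel_on C k" "\<forall>u\<in>C. k u u = 1" "0 < s2" "\<forall>i\<in>{1..n}. x i \<in> C" "z \<in> C"
  shows "0 < post_sd k s2 x n z"
proof -
  have "0 < sqrt (s2 / (real n + s2))" using assms(3) by simp
  then show ?thesis using post_sd_bounds[OF assms] by linarith
qed

lemma post_mean_diff_le_at_EI_maximizer:
  fixes k :: "'a \<Rightarrow> 'a \<Rightarrow> real"
  assumes psd: "psd_kernel_on C k" and diag: "\<forall>u\<in>C. k u u = 1" and s2: "0 < s2"
    and n: "1 \<le> n" and x: "\<forall>i\<in>{1..n}. x i \<in> C" and z: "z \<in> C" and p: "p \<in> C"
    and EI_max: "\<forall>w\<in>C. EI k s2 x y n w \<le> EI k s2 x y n z"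
  shows "post_mean k s2 x y n z - post_mean k s2 x y n p \<le>
    (sqrt (ln ((real n + s2) / s2)) + phi 0) * post_sd k s2 x n z + sqrt (2 / pi) * post_sd k s2 x n p"
proof -
  define xi where "xi = incumbent k s2 x y n"
  define c where "c = sqrt (s2 / (real n + s2))"
  have sd: "c \<le> post_sd k s2 x n w \<and> post_sd k s2 x n w \<le> 1" if "w \<in> C" for w
    unfolding c_def using post_sd_bounds[OF psd diag s2 x that] .
  have c: "0 < c" "c \<le> 1" using s2 sd[OF z] by (auto simp: c_def)
  obtain i where i: "i \<in> {1..n}" "xi = post_mean k s2 x y n (x i)"
  proof -
    have "xi \<in> (\<lambda>i. post_mean k s2 x y n (x i)) ` {1..n}"
      unfolding xi_def incumbent_def by (rule Min_in) (use n in auto)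
    then show ?thesis using that by blast
  qed
  have "c * phi 0 \<le> EI k s2 x y n (x i)"
    using i sd[of "x i"] x phi_0_pos by (simp add: EI_eq_ei xi_def ei_zero)
  also have "\<dots> \<le> EI k s2 x y n z" using EI_max x i by blast
  finally have "c * phi 0 \<le> EI k s2 x y n z" .
  moreover have "- 2 * ln c = ln ((real n + s2) / s2)"
    using s2 by (simp add: c_def ln_sqrt ln_div)
  moreover have "EI k s2 x y n p \<le> EI k s2 x y n z" using EI_max p by blast
  ultimately show ?thesis
    using improvement_diff_le[of "post_sd k s2 x n z" "post_sd k s2 x n p" c
        "xi - post_mean k s2 x y n z" "xi - post_mean k s2 x y n p"] sd[OF z] sd[OF p] c
    by (simp add: EI_eq_ei xi_def[symmetric])
qed

section \<open>The discretization and the confidence parameter\<close>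

lemma exp_16_div_5_le: "exp (16 / 5 :: real) \<le> 48"
proof -
  have "exp (16 / 5 :: real) = exp 1 ^ 3 * exp (1 / 5)"
    by (simp add: exp_of_nat_mult[symmetric] exp_add[symmetric])
  also have "\<dots> \<le> 3 ^ 3 * (1 + 1 / 5 + (1 / 5)\<^sup>2)"
    using exp_le exp_bound[of "1 / 5 :: real"] by (intro mult_mono power_mono) auto
  also have "\<dots> \<le> 48" by (simp add: power2_eq_square)
  finally show ?thesis .
qed

text \<open>This is where the constant \<open>c\<^sub>\<alpha> = 1 + 0.328\<close> comes from.\<close>

lemma sqrt_two_div_pi_le_beta:
  assumes N: "1 \<le> N" and t: "2 \<le> t" and delta: "0 < delta" "delta < 1"
  shows "sqrt (2 / pi) \<le> 0.328 * sqrt (2 * ln (8 * N * (pi\<^sup>2 * t\<^sup>2 / 6) / delta))"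
proof -
  let ?X = "8 * N * (pi\<^sup>2 * t\<^sup>2 / 6)"
  have "3\<^sup>2 \<le> pi\<^sup>2" "2\<^sup>2 \<le> t\<^sup>2"
    using pi_gt3 t by (intro power_mono; simp)+
  then have "8 * 1 * (3\<^sup>2 * 2\<^sup>2 / 6) \<le> ?X"
    using N by (intro mult_mono divide_right_mono) auto
  also have "?X \<le> ?X / delta"
    using divide_left_mono[of delta 1 ?X] delta \<open>8 * 1 * (3\<^sup>2 * 2\<^sup>2 / 6) \<le> ?X\<close> by simp
  finally have "exp (16 / 5) \<le> ?X / delta"
    using exp_16_div_5_le by simp
  then have "16 / 5 \<le> ln (?X / delta)"
    using ln_ge_iff less_le_trans[OF exp_gt_zero] by blast
  have "2 / pi \<le> 2 / 3" using pi_gt3 by (intro divide_left_mono) auto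
  also have "\<dots> \<le> 0.328\<^sup>2 * (2 * ln (?X / delta))"
    using \<open>16 / 5 \<le> ln (?X / delta)\<close> by (simp add: power2_eq_square)
  finally show ?thesis
    using real_sqrt_le_mono by (fastforce simp: real_sqrt_mult)
qed

lemma one_le_grid_size:
  fixes r D L t :: real
  assumes "0 < r" "0 < D" "1 / (r * D) \<le> L" "1 \<le> t"
  shows "1 \<le> (L * r * D * t\<^sup>2) ^ m"
proof -
  have "0 < r * D" using assms(1,2) by (rule mult_pos_pos)
  then have "1 \<le> L * (r * D)" using assms(3) by (simp add: divide_le_eq)
  moreover have "1 \<le> t\<^sup>2" using assms by (simp add: one_le_power)
  ultimately have "1 * 1 \<le> L * (r * D) * t\<^sup>2" by (intro mult_mono) auto
  then show ?thesis by (intro one_le_power) (simp add: mult.assoc)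
qed

lemma l1dist_commute: "l1dist u w = l1dist w u"
  unfolding l1dist_def by (intro sum.cong refl) (metis abs_minus_commute inner_diff_left)

section \<open>The regret bound\<close>

lemma regret_decomposition:
  fixes b g e s s' :: real
  assumes "f1 - m1 \<le> b * s" "m2 - f2 \<le> b * s'" "f2 - f0 \<le> e"
    and "m1 - m2 \<le> g * s + sqrt (2 / pi) * s'" and beta: "sqrt (2 / pi) \<le> 0.328 * b"
    and "0 \<le> s" "0 \<le> s'"
  shows "f1 - f0 \<le> (g + 2 * b) * s + 1.328 * b * s' + e"
proof -
  have "0 \<le> 0.328 * b" using beta by (rule order_trans[rotated]) simp
  then have "0 \<le> b * s" using \<open>0 \<le> s\<close> by simp
  moreover have "sqrt (2 / pi) * s' \<le> 0.328 * b * s'" using beta \<open>0 \<le> s'\<close> by (rule mult_right_mono)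
  ultimately show ?thesis using assms(1-4) by (simp add: algebra_simps)
qed

theorem mainTheorem6:
  fixes C :: "'a::euclidean_space set"
    and r L sigma delta :: real
    and k :: "'a \<Rightarrow> 'a \<Rightarrow> real"
    and f :: "'a \<Rightarrow> real"
    and x :: "nat \<Rightarrow> 'a" and y :: "nat \<Rightarrow> real"
    and xstar :: 'a
    and Cd :: "nat \<Rightarrow> 'a set" and proj :: "nat \<Rightarrow> 'a \<Rightarrow> 'a"
    and t :: nat
  defines "d \<equiv> real DIM('a)"
  defines "mu \<equiv> post_mean k (sigma\<^sup>2) x y"
    and "sd \<equiv> post_sd k (sigma\<^sup>2) x"
    and "beta \<equiv> (\<lambda>s::nat. 2 * ln (8 * real (card (Cd s)) * (pi\<^sup>2 * (real s)\<^sup>2 / 6) / delta))"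
  assumes r_pos: "r > 0"
    and C_compact: "compact C"
    and C_box: "\<forall>z\<in>C. \<forall>i\<in>Basis. 0 \<le> z \<bullet> i \<and> z \<bullet> i \<le> r"
    and k_psd: "psd_kernel_on C k"
    and k_le1: "\<forall>u\<in>C. \<forall>v\<in>C. k u v \<le> 1"
    and k_diag: "\<forall>u\<in>C. k u u = 1"
    and L_ge: "L \<ge> 1 / (r * d)"
    and f_lip: "\<forall>u\<in>C. \<forall>v\<in>C. \<bar>f u - f v\<bar> \<le> L * l1dist u v"
    and xstar_min: "xstar \<in> C" "\<forall>z\<in>C. f xstar \<le> f z"
    and sigma_pos: "sigma > 0"
    and delta: "0 < delta" "delta < 1"
    and x_in_C: "\<forall>s\<ge>1. x s \<in> C"
    and x_EI: "\<forall>s\<ge>2. \<forall>z\<in>C. EI k (sigma\<^sup>2) x y (s - 1) z \<le> EI k (sigma\<^sup>2) x y (s - 1) (x s)"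
    and Cd_fin: "\<forall>s\<ge>1. finite (Cd s) \<and> Cd s \<subseteq> C \<and> real (card (Cd s)) = (L * r * d * (real s)\<^sup>2) ^ DIM('a)"
    and proj_closest: "\<forall>s\<ge>1. \<forall>z\<in>C. proj s z \<in> Cd s \<and> (\<forall>w\<in>Cd s. l1dist z (proj s z) \<le> l1dist z w)"
    and proj_close: "\<forall>s\<ge>1. \<forall>z\<in>C. l1dist z (proj s z) \<le> 1 / (L * (real s)\<^sup>2)"
    and t_ge: "t \<ge> 2"
    and Er: "\<forall>z \<in> Cd t \<union> {x t, x (t - 1)}.
               \<bar>f z - mu (t - 1) z\<bar> \<le> sqrt (beta t) * sd (t - 1) z"
  shows "f (x t) - f xstar \<le>
     (sqrt (ln ((real t - 1 + sigma\<^sup>2) / (2 * pi * (phi 0)\<^sup>2 * sigma\<^sup>2))) + phi 0 + 2 * sqrt (beta t))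
        * sd (t - 1) (x t)
     + 1.328 * sqrt (beta t) * sd (t - 1) (proj t xstar) + 1 / (real t)\<^sup>2"
proof -
  define n where "n = t - 1"
  define p where "p = proj t xstar"
  have n: "1 \<le> n" "t - 1 = n" "real t - 1 = real n" using t_ge by (auto simp: n_def)
  have x: "\<forall>i\<in>{1..n}. x i \<in> C" "x t \<in> C" using x_in_C t_ge by (auto simp: n_def)
  have p: "p \<in> Cd t" "p \<in> C"
    using proj_closest[rule_format, of t xstar] Cd_fin[rule_format, of t] xstar_min(1) t_ge
    by (auto simp: p_def)
  have s2: "0 < sigma\<^sup>2" using sigma_pos by simp
  have mean_diff: "mu n (x t) - mu n p \<le>
      (sqrt (ln ((real n + sigma\<^sup>2) / sigma\<^sup>2)) + phi 0) * sd n (x t) + sqrt (2 / pi) * sd n p"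
    unfolding mu_def sd_def using x_EI t_ge
    by (intro post_mean_diff_le_at_EI_maximizer[OF k_psd k_diag s2 n(1) x p(2)]) (auto simp: n_def)
  have sd_nonneg: "0 \<le> sd n w" if "w \<in> C" for w
    unfolding sd_def using post_sd_pos[OF k_psd k_diag s2 x(1) that] by simp
  have "1 \<le> real (card (Cd t))"
    using one_le_grid_size[OF r_pos _ L_ge, of t] Cd_fin t_ge by (simp add: d_def)
  then have beta: "sqrt (2 / pi) \<le> 0.328 * sqrt (beta t)"
    using sqrt_two_div_pi_le_beta[of _ "real t", OF _ _ delta] t_ge unfolding beta_def by simp
  have conf: "f (x t) - mu n (x t) \<le> sqrt (beta t) * sd n (x t)" "mu n p - f p \<le> sqrt (beta t) * sd n p"
    using Er[rule_format, of "x t"] Er[rule_format, of p] p(1) unfolding n(2)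
    by (auto simp: abs_le_iff)
  have "0 < L" using L_ge r_pos by (simp add: d_def less_le_trans[OF _ L_ge])
  have "f p - f xstar \<le> L * l1dist xstar p"
    using f_lip[rule_format, OF p(2) xstar_min(1)] by (simp add: l1dist_commute)
  also have "\<dots> \<le> L * (1 / (L * (real t)\<^sup>2))"
    using proj_close[rule_format, of t xstar] t_ge xstar_min(1) \<open>0 < L\<close>
    by (intro mult_left_mono) (auto simp: p_def)
  finally have lip: "f p - f xstar \<le> 1 / (real t)\<^sup>2" using \<open>0 < L\<close> by simp
  have c_mu: "(real t - 1 + sigma\<^sup>2) / (2 * pi * (phi 0)\<^sup>2 * sigma\<^sup>2) = (real n + sigma\<^sup>2) / sigma\<^sup>2"
    by (simp add: n(3) phi_0_squared)
  show ?thesis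
    unfolding c_mu n(2) p_def[symmetric]
    using regret_decomposition[OF conf(1) conf(2) lip mean_diff beta] sd_nonneg x(2) p(2) by blast
qed

end
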